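(* Let $H=\mathrm{sh}_0(G_{\mathtt{ALD}})$ and let $M$ be the set of cosets $gH$, $g\in G_{\mathtt{ALD}}$. Then the operations $(gH)*(hH):=(g*h)H$ and $(gH)\circ(hH):=(g\circ h)H$ are well defined on $M$, and $(M,*,\circ)$ is an $\mathtt{ALD}$-algebra, i.e. it satisfies $a*(b*c)=(a*b)*(a*c)$, $a*(b\circ c)=(a*b)\circ(a*c)$ and $a*(b*c)=(a\circ b)*c$ for all $a,b,c\in M$.
   Context: Addresses are finite sequences over $\{0,1\}$, $\varepsilon$ empty, concatenation by juxtaposition; incomparable means neither is a prefix of the other. $G_{\mathtt{ALD}}$ is the group generated by $S_\alpha,A_\alpha$ ($\alpha\in\{0,1\}^*$) subject to the relations, with $X,Y\in\{S,A\}$ and arbitrary addresses $\alpha,\beta,\delta$ ($\delta$ possibly empty): $X_\alpha Y_\beta=Y_\beta X_\alpha$ for $\alpha,\beta$ incomparable; $X_{\alpha0\delta}S_\alpha=S_\alpha X_{\alpha00\delta}X_{\alpha10\delta}$; $X_{\alpha10\delta}S_\alpha=S_\alpha X_{\alpha01\delta}$; $X_{\alpha11\delta}S_\alpha=S_\alpha X_{\alpha11\delta}$; $X_{\alpha0\delta}A_\alpha=A_\alpha X_{\alpha00\delta}$; $X_{\alpha10\delta}A_\alpha=A_\alpha X_{\alpha01\delta}$; $X_{\alpha11\delta}A_\alpha=A_\alpha X_{\alpha1\delta}$; $S_\alpha S_{\alpha1}S_\alpha=S_{\alpha1}S_\alpha S_{\alpha1}S_{\alpha0}$; $S_\alpha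 S_{\alpha1}A_\alpha=A_{\alpha1}S_\alpha S_{\alpha0}$; $A_\alpha S_\alpha=S_{\alpha1}S_\alpha A_{\alpha1}A_{\alpha0}$. $\mathrm{sh}_\beta$ is the endomorphism with $S_\alpha\mapsto S_{\beta\alpha}$, $A_\alpha\mapsto A_{\beta\alpha}$. On $G_{\mathtt{ALD}}$: $g*h:=g\,\mathrm{sh}_1(h)\,S_\varepsilon\,\mathrm{sh}_1(g)^{-1}$ and $g\circ h:=g\,\mathrm{sh}_1(h)\,A_\varepsilon$. *)

theory Defs
  imports Main
begin

text \<open>Addresses: bool lists, False = 0, True = 1.\<close>
type_synonym addr = "bool list"

datatype gen = S addr | A addr

text \<open>Words in the free group: letters are (sign, generator); True = positive.\<close>
type_synonym word = "(bool \<times> gen) list"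

definition gw :: "gen \<Rightarrow> (bool \<times> gen)" where "gw x = (True, x)"

definition is_prefix :: "addr \<Rightarrow> addr \<Rightarrow> bool" where
  "is_prefix a b \<longleftrightarrow> (\<exists>c. b = a @ c)"

definition incomparable :: "addr \<Rightarrow> addr \<Rightarrow> bool" where
  "incomparable a b \<longleftrightarrow> \<not> is_prefix a b \<and> \<not> is_prefix b a"

inductive ald_rel :: "word \<Rightarrow> word \<Rightarrow> bool" where
  comm: "X \<in> {S, A} \<Longrightarrow> Y \<in> {S, A} \<Longrightarrow> incomparable \<alpha> \<beta> \<Longrightarrow>
     ald_rel [gw (X \<alpha>), gw (Y \<beta>)] [gw (Y \<beta>), gw (X \<alpha>)]"
| r2: "X \<in> {S, A} \<Longrightarrow>
     ald_rel [gw (X (\<alpha> @ [False] @ \<delta>)), gw (S \<alpha>)]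
             [gw (S \<alpha>), gw (X (\<alpha> @ [False, False] @ \<delta>)), gw (X (\<alpha> @ [True, False] @ \<delta>))]"
| r3: "X \<in> {S, A} \<Longrightarrow>
     ald_rel [gw (X (\<alpha> @ [True, False] @ \<delta>)), gw (S \<alpha>)]
             [gw (S \<alpha>), gw (X (\<alpha> @ [False, True] @ \<delta>))]"
| r4: "X \<in> {S, A} \<Longrightarrow>
     ald_rel [gw (X (\<alpha> @ [True, True] @ \<delta>)), gw (S \<alpha>)]
             [gw (S \<alpha>), gw (X (\<alpha> @ [True, True] @ \<delta>))]"
| r5: "X \<in> {S, A} \<Longrightarrow>
     ald_rel [gw (X (\<alpha> @ [False] @ \<delta>)), gw (A \<alpha>)]
             [gw (A \<alpha>), gw (X (\<alpha> @ [False, False] @ \<delta>))]"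
| r6: "X \<in> {S, A} \<Longrightarrow>
     ald_rel [gw (X (\<alpha> @ [True, False] @ \<delta>)), gw (A \<alpha>)]
             [gw (A \<alpha>), gw (X (\<alpha> @ [False, True] @ \<delta>))]"
| r7: "X \<in> {S, A} \<Longrightarrow>
     ald_rel [gw (X (\<alpha> @ [True, True] @ \<delta>)), gw (A \<alpha>)]
             [gw (A \<alpha>), gw (X (\<alpha> @ [True] @ \<delta>))]"
| r8: "ald_rel [gw (S \<alpha>), gw (S (\<alpha> @ [True])), gw (S \<alpha>)]
               [gw (S (\<alpha> @ [True])), gw (S \<alpha>), gw (S (\<alpha> @ [True])), gw (S (\<alpha> @ [False]))]"
| r9: "ald_rel [gw (S \<alpha>), gw (S (\<alpha> @ [True])), gw (A \<alpha>)]
               [gw (A (\<alpha> @ [True])), gw (S \<alpha>), gw (S (\<alpha> @ [False]))]"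
| r10: "ald_rel [gw (A \<alpha>), gw (S \<alpha>)]
                [gw (S (\<alpha> @ [True])), gw (S \<alpha>), gw (A (\<alpha> @ [True])), gw (A (\<alpha> @ [False]))]"

inductive geq :: "word \<Rightarrow> word \<Rightarrow> bool" where
  refl: "geq w w"
| sym: "geq u v \<Longrightarrow> geq v u"
| trans: "geq u v \<Longrightarrow> geq v w \<Longrightarrow> geq u w"
| cancel: "geq (u @ [(b, x), (\<not> b, x)] @ v) (u @ v)"
| rel: "ald_rel l r \<Longrightarrow> geq (u @ l @ v) (u @ r @ v)"

definition winv :: "word \<Rightarrow> word" where
  "winv w = rev (map (\<lambda>(b, x). (\<not> b, x)) w)"

fun sh_gen :: "addr \<Rightarrow> gen \<Rightarrow> gen" where
  "sh_gen \<beta> (S \<alpha>) = S (\<beta> @ \<alpha>)"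
| "sh_gen \<beta> (A \<alpha>) = A (\<beta> @ \<alpha>)"

definition sh :: "addr \<Rightarrow> word \<Rightarrow> word" where
  "sh \<beta> w = map (\<lambda>(b, x). (b, sh_gen \<beta> x)) w"

definition ald_star :: "word \<Rightarrow> word \<Rightarrow> word" where
  "ald_star g h = g @ sh [True] h @ [gw (S [])] @ winv (sh [True] g)"

definition ald_circ :: "word \<Rightarrow> word \<Rightarrow> word" where
  "ald_circ g h = g @ sh [True] h @ [gw (A [])]"

text \<open>Same left coset of H = sh_0(G_ALD): gH = g'H iff g^{-1} g' \<in> H.\<close>
definition coset_eq :: "word \<Rightarrow> word \<Rightarrow> bool" where
  "coset_eq g g' \<longleftrightarrow> (\<exists>w. geq (winv g @ g') (sh [False] w))"

end

theory Submission
  imports Defs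
begin

text \<open>
  Words modulo the relations form a group on which every \<open>sh\<^sub>\<beta>\<close> acts as an
  endomorphism. At \<open>\<alpha> = \<epsilon>\<close>, the relations with left-hand side \<open>X S\<^sub>\<epsilon>\<close> or
  \<open>X A\<^sub>\<epsilon>\<close> say that conjugation by \<open>S\<^sub>\<epsilon>\<close> and \<open>A\<^sub>\<epsilon>\<close> acts on the generators of
  sh_0(G), sh_10(G), sh_11(G) by explicit homomorphisms, hence on these whole
  subgroups; moreover sh_0(G) and sh_1(G) commute. So \<open>S\<^sub>\<epsilon>\<close> and \<open>A\<^sub>\<epsilon>\<close> can be
  moved past shifted elements. Replacing g, h by g sh_0(u), h sh_0(v) then multiplies
  g * h and g \<circ> h on the right by sh_0(sh_0(u) sh_1(v)), and, using the last three
  relations at \<open>\<alpha> = \<epsilon>\<close>, the two sides of each ALD law differ by the right factor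
  sh_0(\<open>S\<^sub>\<epsilon>\<close>) for the first two laws and sh_0(\<open>A\<^sub>\<epsilon>\<close>) for the third.
\<close>

section \<open>The group as a quotient of words\<close>

lemma geq_append_cong: "geq u v \<Longrightarrow> geq (p @ u @ q) (p @ v @ q)"
proof (induction rule: geq.induct)
  case (cancel u b x v)
  show ?case using geq.cancel[of "p @ u" b x "v @ q"] by simp
next
  case (rel l r u v)
  show ?case using geq.rel[OF rel.hyps, of "p @ u" "v @ q"] by simp
qed (blast intro: geq.intros)+

lemma geq_append: "geq u u' \<Longrightarrow> geq v v' \<Longrightarrow> geq (u @ v) (u' @ v')"
  using geq_append_cong[of u u' "[]" v] geq_append_cong[of v v' u' "[]"]
  by (auto intro: geq.trans)

lemma winv_Nil [simp]: "winv [] = []"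
  by (simp add: winv_def)

lemma winv_append [simp]: "winv (u @ v) = winv v @ winv u"
  by (simp add: winv_def)

lemma winv_winv [simp]: "winv (winv w) = w"
  by (simp add: winv_def rev_map case_prod_beta comp_def)

lemma geq_append_winv: "geq (w @ winv w) []"
proof (induction w)
  case Nil
  show ?case by (simp add: geq.refl)
next
  case (Cons l w)
  obtain b x where l: "l = (b, x)" by fastforce
  have "geq ([(b, x)] @ (w @ winv w) @ [(\<not> b, x)]) ([(b, x)] @ [] @ [(\<not> b, x)])"
    using Cons.IH by (rule geq_append_cong)
  moreover have "geq [(b, x), (\<not> b, x)] []"
    using geq.cancel[of "[]" b x "[]"] by simp
  ultimately show ?case
    using l by (auto simp: winv_def intro: geq.trans)
qed

lemma geq_winv_append: "geq (winv w @ w) []"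
  using geq_append_winv[of "winv w"] by simp

lemma geq_winv: "geq u v \<Longrightarrow> geq (winv u) (winv v)"
proof -
  assume "geq u v"
  then have "geq (winv u @ u @ winv v) (winv u @ v @ winv v)"
    by (rule geq_append_cong)
  moreover have "geq (winv u @ u @ winv v) (winv v)"
    using geq_append[OF geq_winv_append geq.refl, of u "winv v"] by simp
  moreover have "geq (winv u @ v @ winv v) (winv u)"
    using geq_append[OF geq.refl geq_append_winv, of "winv u" v] by simp
  ultimately show ?thesis
    by (meson geq.sym geq.trans)
qed

quotient_type G = word / geq morphisms rep_G abs_G
  by (rule equivpI) (auto simp: reflp_def symp_def transp_def intro: geq.intros)

instantiation G :: group_add
begin

lift_definition zero_G :: G is "[]" .

lift_definition plus_G :: "G \<Rightarrow> G \<Rightarrow> G" is "(@)"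
  by (rule geq_append)

lift_definition uminus_G :: "G \<Rightarrow> G" is winv
  by (rule geq_winv)

definition minus_G :: "G \<Rightarrow> G \<Rightarrow> G" where
  "minus_G x y = x + - y"

instance
proof
  fix x y z :: G
  show "x + y + z = x + (y + z)" by transfer (simp add: geq.refl)
  show "0 + x = x" by transfer (simp add: geq.refl)
  show "x + 0 = x" by transfer (simp add: geq.refl)
  show "- x + x = 0" by transfer (rule geq_winv_append)
  show "x + - y = x - y" by (simp add: minus_G_def)
qed

end

(* keeps x + - y from turning into x - y, so that add.assoc normalises every sum below *)
declare add_uminus_conv_diff [simp del]

definition group_hom :: "('a::group_add \<Rightarrow> 'b::group_add) \<Rightarrow> bool" where
  "group_hom f \<longleftrightarrow> (\<forall>x y. f (x + y) = f x + f y)"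

lemma group_hom_zero:
  assumes "group_hom f"
  shows "f 0 = 0"
proof -
  have "f 0 + f 0 = f 0"
    using assms unfolding group_hom_def by (metis add_0_left)
  then show ?thesis
    using add_left_cancel[of "f 0" "f 0" 0] by simp
qed

lemma group_hom_minus:
  assumes "group_hom f"
  shows "f (- x) = - f x"
proof -
  have "f (- x) + f x = f 0"
    using assms unfolding group_hom_def by (metis left_minus)
  then show ?thesis
    using group_hom_zero[OF assms] by (simp add: eq_neg_iff_add_eq_0)
qed

definition commute :: "'a::group_add \<Rightarrow> 'a \<Rightarrow> bool" where
  "commute a b \<longleftrightarrow> a + b = b + a"

lemma commute_sym: "commute a b \<Longrightarrow> commute b a"
  by (simp add: commute_def)

lemma conj_swap_minus:
  fixes a b c :: "'a::group_add"
  assumes "a + c = c + b"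
  shows "- a + c = c + - b"
proof -
  have "- a + c = - a + (c + b) + - b" by (simp add: add.assoc)
  also have "\<dots> = c + - b" by (simp add: assms[symmetric] add.assoc)
  finally show ?thesis .
qed

lemma commute_zero_right [simp]: "commute a 0"
  by (simp add: commute_def)

lemma commute_minus_right: "commute a b \<Longrightarrow> commute a (- b)"
  unfolding commute_def using conj_swap_minus[of b a b] by simp

lemma commute_add_right: "commute a b \<Longrightarrow> commute a c \<Longrightarrow> commute a (b + c)"
  unfolding commute_def by (metis add.assoc)

lemma commute_left_commute: "commute a b \<Longrightarrow> a + (b + c) = b + (a + c)"
  unfolding commute_def by (metis add.assoc)

lemma commute_group_hom: "group_hom f \<Longrightarrow> commute a b \<Longrightarrow> commute (f a) (f b)"
  unfolding commute_def group_hom_def by (metis (no_types))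

lemma group_hom_add:
  assumes "group_hom f" and "group_hom g" and "\<And>x y. commute (g x) (f y)"
  shows "group_hom (\<lambda>x. f x + g x)"
  unfolding group_hom_def
proof (intro allI)
  fix x y
  have "f (x + y) + g (x + y) = f x + (f y + (g x + g y))"
    using assms(1,2) by (simp add: group_hom_def add.assoc)
  also have "\<dots> = f x + (g x + (f y + g y))"
    using commute_left_commute[OF commute_sym[OF assms(3)[of x y]]] by simp
  finally show "f (x + y) + g (x + y) = f x + g x + (f y + g y)"
    by (simp add: add.assoc)
qed

lemma sh_Nil [simp]: "sh p [] = []"
  by (simp add: sh_def)

lemma sh_Cons [simp]: "sh p ((b, x) # w) = (b, sh_gen p x) # sh p w"
  by (simp add: sh_def)

lemma sh_append [simp]: "sh p (u @ v) = sh p u @ sh p v"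
  by (simp add: sh_def)

lemma sh_winv: "sh p (winv w) = winv (sh p w)"
  by (simp add: sh_def winv_def rev_map case_prod_beta comp_def)

lemma sh_gen_sh_gen [simp]: "sh_gen p (sh_gen q x) = sh_gen (p @ q) x"
  by (cases x) auto

lemma sh_sh: "sh p (sh q w) = sh (p @ q) w"
  by (induction w) (auto simp: sh_def)

lemma incomparable_append_iff: "incomparable (p @ a) (p @ b) \<longleftrightarrow> incomparable a b"
  by (simp add: incomparable_def is_prefix_def)

lemma sh_gen_X: "X \<in> {S, A} \<Longrightarrow> sh_gen p (X a) = X (p @ a)"
  by auto

lemma ald_rel_sh: "ald_rel l r \<Longrightarrow> ald_rel (sh p l) (sh p r)"
proof (induction rule: ald_rel.induct)
  case (comm X Y \<alpha> \<beta>)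
  then show ?case
    using ald_rel.comm[of X Y "p @ \<alpha>" "p @ \<beta>"] by (simp add: gw_def sh_gen_X incomparable_append_iff)
qed (insert ald_rel.intros[where \<alpha> = "p @ _"], simp_all add: gw_def sh_gen_X)

lemma geq_sh: "geq u v \<Longrightarrow> geq (sh p u) (sh p v)"
proof (induction rule: geq.induct)
  case (cancel u b x v)
  show ?case using geq.cancel[of "sh p u" b "sh_gen p x" "sh p v"] by simp
next
  case (rel l r u v)
  show ?case using geq.rel[OF ald_rel_sh[OF rel.hyps, of p], of "sh p u" "sh p v"] by simp
qed (blast intro: geq.intros)+

lift_definition shG :: "addr \<Rightarrow> G \<Rightarrow> G" is sh
  by (rule geq_sh)

lemma shG_add [simp]: "shG p (x + y) = shG p x + shG p y"
  by transfer (simp add: geq.refl)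

lemma shG_zero [simp]: "shG p 0 = 0"
  by transfer (simp add: geq.refl)

lemma shG_minus [simp]: "shG p (- x) = - shG p x"
  by transfer (simp add: geq.refl sh_winv)

lemma shG_shG [simp]: "shG p (shG q x) = shG (p @ q) x"
  by transfer (simp add: geq.refl sh_sh)

lemma group_hom_shG: "group_hom (shG p)"
  by (simp add: group_hom_def)

definition genG :: "gen \<Rightarrow> G" where
  "genG x = abs_G [gw x]"

lemma shG_genG: "shG p (genG x) = genG (sh_gen p x)"
  by (simp add: genG_def shG.abs_eq gw_def)

lemma abs_G_Nil [simp]: "abs_G [] = 0"
  by (simp add: zero_G_def)

lemma abs_G_append: "abs_G (u @ v) = abs_G u + abs_G v"
  by (simp add: plus_G.abs_eq)

lemma abs_G_gw_Cons [simp]: "abs_G (gw x # w) = genG x + abs_G w"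
  using abs_G_append[of "[gw x]" w] by (simp add: genG_def)

lemma abs_G_winv: "abs_G (winv w) = - abs_G w"
  by (simp add: uminus_G.abs_eq)

lemma abs_G_sh: "abs_G (sh p w) = shG p (abs_G w)"
  by (simp add: shG.abs_eq)

lemma abs_G_letter: "abs_G [(b, x)] = (if b then genG x else - genG x)"
  using abs_G_winv[of "[gw x]"] by (simp add: genG_def gw_def winv_def)

lemma abs_G_eq_of_ald_rel: "ald_rel l r \<Longrightarrow> abs_G l = abs_G r"
  using geq.rel[of l r "[]" "[]"] by (simp add: G.abs_eq_iff)

lemma G_induct [case_names zero add minus gen]:
  assumes "P 0"
    and "\<And>x y. P x \<Longrightarrow> P y \<Longrightarrow> P (x + y)"
    and "\<And>x. P x \<Longrightarrow> P (- x)"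
    and "\<And>g. P (genG g)"
  shows "P z"
proof -
  obtain w where z: "z = abs_G w"
    by (induct z rule: G.abs_induct) auto
  have "P (abs_G w)"
  proof (induction w)
    case Nil
    show ?case using assms(1) by simp
  next
    case (Cons l w)
    obtain b x where l: "l = (b, x)" by fastforce
    then have "P (abs_G [l])"
      using assms(3,4) by (simp add: abs_G_letter)
    with Cons.IH show ?case
      using assms(2) abs_G_append[of "[l]" w] by simp
  qed
  with z show ?thesis by simp
qed

lemma group_hom_intertwining:
  assumes f: "group_hom f" and g: "group_hom g"
    and gen: "\<And>x. f (genG x) + c = c + g (genG x)"
  shows "f z + c = c + g z"
proof (induction z rule: G_induct)
  case zero
  show ?case by (simp add: f g group_hom_zero)
next
  case (add x y)
  have "f (x + y) + c = f x + (f y + c)"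
    using f by (simp add: group_hom_def add.assoc)
  also have "\<dots> = c + g (x + y)"
    using g by (simp add: add.IH group_hom_def flip: add.assoc)
  finally show ?case .
next
  case (minus x)
  then show ?case by (simp add: f g group_hom_minus conj_swap_minus)
qed (rule gen)

lemma shG_intertwining:
  assumes "\<And>X \<delta>. X \<in> {S, A} \<Longrightarrow> genG (X (p @ \<delta>)) + c = c + genG (X (q @ \<delta>))"
  shows "shG p x + c = c + shG q x"
proof (rule group_hom_intertwining[where f = "shG p" and g = "shG q"])
  fix g
  show "shG p (genG g) + c = c + shG q (genG g)"
    using assms by (cases g) (simp_all add: shG_genG)
qed (rule group_hom_shG)+

section \<open>Moving the root generators past shifted elements\<close>

lemma commute_genG_0_1: "commute (genG (sh_gen [False] x)) (genG (sh_gen [True] y))"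
proof -
  obtain X a where X: "X \<in> {S, A}" "x = X a" by (cases x) auto
  obtain Y b where Y: "Y \<in> {S, A}" "y = Y b" by (cases y) auto
  have "incomparable (False # a) (True # b)"
    by (simp add: incomparable_def is_prefix_def)
  from abs_G_eq_of_ald_rel[OF ald_rel.comm[OF X(1) Y(1) this]] show ?thesis
    using X Y by (auto simp: commute_def)
qed

lemma commute_shG_0_1: "commute (shG [False] x) (shG [True] y)"
proof -
  have "commute (shG [True] y) (shG [False] x)"
  proof (induction x rule: G_induct)
    case (gen g)
    have "commute (genG (sh_gen [False] g)) (shG [True] y)"
    proof (induction y rule: G_induct)
      case (gen h)
      show ?case using commute_genG_0_1 by (simp add: shG_genG)
    qed (simp_all add: commute_add_right commute_minus_right)
    then show ?case by (simp add: shG_genG commute_sym)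
  qed (simp_all add: commute_add_right commute_minus_right)
  then show ?thesis by (rule commute_sym)
qed

lemma commute_shG_incomparable: "commute (shG (p @ False # q) x) (shG (p @ True # r) y)"
  using commute_group_hom[OF group_hom_shG commute_shG_0_1, of p "shG q x" "shG r y"] by simp

abbreviation S\<^sub>\<epsilon> :: G where "S\<^sub>\<epsilon> \<equiv> genG (S [])"
abbreviation A\<^sub>\<epsilon> :: G where "A\<^sub>\<epsilon> \<equiv> genG (A [])"

lemma S_conj_shG_0:
  "shG [False] x + S\<^sub>\<epsilon> = S\<^sub>\<epsilon> + (shG [False, False] x + shG [True, False] x)"
proof (rule group_hom_intertwining[where f = "shG [False]"
      and g = "\<lambda>x. shG [False, False] x + shG [True, False] x"])
  show "group_hom (\<lambda>x. shG [False, False] x + shG [True, False] x)"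
    using commute_sym[OF commute_shG_incomparable[of "[]"]]
    by (intro group_hom_add group_hom_shG) simp
  fix g
  show "shG [False] (genG g) + S\<^sub>\<epsilon> =
      S\<^sub>\<epsilon> + (shG [False, False] (genG g) + shG [True, False] (genG g))"
    using abs_G_eq_of_ald_rel[OF ald_rel.r2[of S "[]"]]
      abs_G_eq_of_ald_rel[OF ald_rel.r2[of A "[]"]]
    by (cases g) (simp_all add: shG_genG add.assoc)
qed (rule group_hom_shG)

lemma S_conj_shG_10: "shG [True, False] x + S\<^sub>\<epsilon> = S\<^sub>\<epsilon> + shG [False, True] x"
  by (rule shG_intertwining) (use abs_G_eq_of_ald_rel[OF ald_rel.r3[where \<alpha> = "[]"]] in simp)

lemma S_conj_shG_11: "shG [True, True] x + S\<^sub>\<epsilon> = S\<^sub>\<epsilon> + shG [True, True] x"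
  by (rule shG_intertwining) (use abs_G_eq_of_ald_rel[OF ald_rel.r4[where \<alpha> = "[]"]] in simp)

lemma A_conj_shG_0: "shG [False] x + A\<^sub>\<epsilon> = A\<^sub>\<epsilon> + shG [False, False] x"
  by (rule shG_intertwining) (use abs_G_eq_of_ald_rel[OF ald_rel.r5[where \<alpha> = "[]"]] in simp)

lemma A_conj_shG_10: "shG [True, False] x + A\<^sub>\<epsilon> = A\<^sub>\<epsilon> + shG [False, True] x"
  by (rule shG_intertwining) (use abs_G_eq_of_ald_rel[OF ald_rel.r6[where \<alpha> = "[]"]] in simp)

lemma A_conj_shG_11: "shG [True, True] x + A\<^sub>\<epsilon> = A\<^sub>\<epsilon> + shG [True] x"
  by (rule shG_intertwining) (use abs_G_eq_of_ald_rel[OF ald_rel.r7[where \<alpha> = "[]"]] in simp)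

lemma S_S1_S_rel:
  "S\<^sub>\<epsilon> + shG [True] S\<^sub>\<epsilon> + S\<^sub>\<epsilon> + - shG [True] S\<^sub>\<epsilon> = shG [True] S\<^sub>\<epsilon> + S\<^sub>\<epsilon> + shG [False] S\<^sub>\<epsilon>"
proof -
  have "S\<^sub>\<epsilon> + shG [True] S\<^sub>\<epsilon> + S\<^sub>\<epsilon> =
      shG [True] S\<^sub>\<epsilon> + S\<^sub>\<epsilon> + shG [True] S\<^sub>\<epsilon> + shG [False] S\<^sub>\<epsilon>"
    using abs_G_eq_of_ald_rel[OF ald_rel.r8[of "[]"]] by (simp add: shG_genG add.assoc)
  also have "\<dots> = shG [True] S\<^sub>\<epsilon> + S\<^sub>\<epsilon> + shG [False] S\<^sub>\<epsilon> + shG [True] S\<^sub>\<epsilon>"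
    using commute_shG_0_1[of S\<^sub>\<epsilon> S\<^sub>\<epsilon>] by (simp add: commute_def add.assoc)
  finally show ?thesis by (simp add: add.assoc)
qed

lemma S_S1_A_rel:
  "S\<^sub>\<epsilon> + shG [True] S\<^sub>\<epsilon> + A\<^sub>\<epsilon> = shG [True] A\<^sub>\<epsilon> + S\<^sub>\<epsilon> + shG [False] S\<^sub>\<epsilon>"
  using abs_G_eq_of_ald_rel[OF ald_rel.r9[of "[]"]] by (simp add: shG_genG add.assoc)

lemma A_S_rel:
  "A\<^sub>\<epsilon> + S\<^sub>\<epsilon> = shG [True] S\<^sub>\<epsilon> + S\<^sub>\<epsilon> + shG [True] A\<^sub>\<epsilon> + shG [False] A\<^sub>\<epsilon>"
  using abs_G_eq_of_ald_rel[OF ald_rel.r10[of "[]"]] by (simp add: shG_genG add.assoc)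

section \<open>The operations modulo \<open>sh\<^sub>0(G)\<close>\<close>

definition starG :: "G \<Rightarrow> G \<Rightarrow> G" where
  "starG x y = x + shG [True] y + S\<^sub>\<epsilon> + - shG [True] x"

definition circG :: "G \<Rightarrow> G \<Rightarrow> G" where
  "circG x y = x + shG [True] y + A\<^sub>\<epsilon>"

lemma abs_G_ald_star: "abs_G (ald_star g h) = starG (abs_G g) (abs_G h)"
  by (simp add: ald_star_def starG_def abs_G_append abs_G_winv abs_G_sh add.assoc)

lemma abs_G_ald_circ: "abs_G (ald_circ g h) = circG (abs_G g) (abs_G h)"
  by (simp add: ald_circ_def circG_def abs_G_append abs_G_sh add.assoc)

lemma starG_add_shG_0:
  "starG (x + shG [False] u) (y + shG [False] v) =
    starG x y + shG [False] (shG [False] u + shG [True] v)"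
proof -
  have "starG (x + shG [False] u) (y + shG [False] v) =
      x + shG [False] u + shG [True] y + shG [True, False] v + S\<^sub>\<epsilon>
        + - shG [True, False] u + - shG [True] x"
    by (simp add: starG_def minus_add add.assoc)
  also have "\<dots> = x + shG [True] y + shG [False] u + shG [True, False] v + S\<^sub>\<epsilon>
        + - shG [True, False] u + - shG [True] x"
    using commute_left_commute[OF commute_shG_0_1[of u y]] by (simp add: add.assoc)
  also have "\<dots> = x + shG [True] y + shG [False] u + S\<^sub>\<epsilon> + shG [False, True] v
        + - shG [True, False] u + - shG [True] x"
    using arg_cong[OF S_conj_shG_10, of "\<lambda>t. t + _"] by (simp add: add.assoc)
  also have "\<dots> = x + shG [True] y + S\<^sub>\<epsilon> + shG [False, False] u + shG [True, False] u
        + shG [False, True] v + - shG [True, False] u + - shG [True] x"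
    using arg_cong[OF S_conj_shG_0, of "\<lambda>t. t + _"] by (simp add: add.assoc)
  also have "\<dots> = x + shG [True] y + S\<^sub>\<epsilon> + shG [False, False] u + shG [False, True] v
        + - shG [True] x"
    using commute_left_commute[OF commute_sym[OF commute_shG_incomparable[of "[]" "[True]" v "[False]" u]]]
    by (simp add: add.assoc)
  also have "\<dots> = x + shG [True] y + S\<^sub>\<epsilon> + - shG [True] x
        + shG [False, False] u + shG [False, True] v"
    using commute_shG_0_1[of "shG [False] u + shG [True] v" "- x"] by (simp add: commute_def add.assoc)
  also have "\<dots> = starG x y + shG [False] (shG [False] u + shG [True] v)"
    by (simp add: starG_def add.assoc)
  finally show ?thesis .
qed

lemma circG_add_shG_0:
  "circG (x + shG [False] u) (y + shG [False] v) =
    circG x y + shG [False] (shG [False] u + shG [True] v)"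
proof -
  have "circG (x + shG [False] u) (y + shG [False] v) =
      x + shG [False] u + shG [True] y + shG [True, False] v + A\<^sub>\<epsilon>"
    by (simp add: circG_def add.assoc)
  also have "\<dots> = x + shG [True] y + shG [False] u + shG [True, False] v + A\<^sub>\<epsilon>"
    using commute_left_commute[OF commute_shG_0_1[of u y]] by (simp add: add.assoc)
  also have "\<dots> = x + shG [True] y + shG [False] u + A\<^sub>\<epsilon> + shG [False, True] v"
    using A_conj_shG_10 by (simp add: add.assoc)
  also have "\<dots> = x + shG [True] y + A\<^sub>\<epsilon> + shG [False, False] u + shG [False, True] v"
    using arg_cong[OF A_conj_shG_0, of "\<lambda>t. t + _"] by (simp add: add.assoc)
  also have "\<dots> = circG x y + shG [False] (shG [False] u + shG [True] v)"
    by (simp add: circG_def add.assoc)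
  finally show ?thesis .
qed

lemma starG_self_distrib:
  "starG (starG a b) (starG a c) = starG a (starG b c) + shG [False] S\<^sub>\<epsilon>"
proof -
  have "starG (starG a b) (starG a c) =
      a + shG [True] b + S\<^sub>\<epsilon> + shG [True, True] c + shG [True] S\<^sub>\<epsilon> + - shG [True, True] a
        + S\<^sub>\<epsilon> + shG [True, True] a + - shG [True] S\<^sub>\<epsilon> + - shG [True, True] b + - shG [True] a"
    by (simp add: starG_def minus_add add.assoc)
  also have "\<dots> = a + shG [True] b + shG [True, True] c + S\<^sub>\<epsilon> + shG [True] S\<^sub>\<epsilon> + S\<^sub>\<epsilon>
        + - shG [True] S\<^sub>\<epsilon> + - shG [True, True] b + - shG [True] a"
    using arg_cong[OF S_conj_shG_11[of c, symmetric], of "\<lambda>t. t + _"]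
      arg_cong[OF conj_swap_minus[OF S_conj_shG_11[of a]], of "\<lambda>t. t + _"]
    by (simp add: add.assoc)
  also have "\<dots> = a + shG [True] b + shG [True, True] c + shG [True] S\<^sub>\<epsilon> + S\<^sub>\<epsilon> + shG [False] S\<^sub>\<epsilon>
        + - shG [True, True] b + - shG [True] a"
    using arg_cong[OF S_S1_S_rel, of "\<lambda>t. t + _"] by (simp add: add.assoc)
  also have "\<dots> = a + shG [True] b + shG [True, True] c + shG [True] S\<^sub>\<epsilon> + - shG [True, True] b
        + S\<^sub>\<epsilon> + - shG [True] a + shG [False] S\<^sub>\<epsilon>"
    using commute_left_commute[OF commute_shG_incomparable[of "[]" "[]" S\<^sub>\<epsilon> "[True]" "- b"]]
      arg_cong[OF conj_swap_minus[OF S_conj_shG_11[of b], symmetric], of "\<lambda>t. t + _"]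
      commute_shG_0_1[of S\<^sub>\<epsilon> "- a"]
    by (simp add: commute_def add.assoc)
  also have "\<dots> = starG a (starG b c) + shG [False] S\<^sub>\<epsilon>"
    by (simp add: starG_def minus_add add.assoc)
  finally show ?thesis .
qed

lemma starG_circG_distrib:
  "circG (starG a b) (starG a c) = starG a (circG b c) + shG [False] S\<^sub>\<epsilon>"
proof -
  have "circG (starG a b) (starG a c) =
      a + shG [True] b + S\<^sub>\<epsilon> + shG [True, True] c + shG [True] S\<^sub>\<epsilon> + - shG [True, True] a + A\<^sub>\<epsilon>"
    by (simp add: starG_def circG_def add.assoc)
  also have "\<dots> = a + shG [True] b + shG [True, True] c + S\<^sub>\<epsilon> + shG [True] S\<^sub>\<epsilon> + A\<^sub>\<epsilon> + - shG [True] a"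
    using arg_cong[OF S_conj_shG_11[of c, symmetric], of "\<lambda>t. t + _"]
      conj_swap_minus[OF A_conj_shG_11[of a]]
    by (simp add: add.assoc)
  also have "\<dots> = a + shG [True] b + shG [True, True] c + shG [True] A\<^sub>\<epsilon> + S\<^sub>\<epsilon> + shG [False] S\<^sub>\<epsilon>
        + - shG [True] a"
    using arg_cong[OF S_S1_A_rel, of "\<lambda>t. t + _"] by (simp add: add.assoc)
  also have "\<dots> = a + shG [True] b + shG [True, True] c + shG [True] A\<^sub>\<epsilon> + S\<^sub>\<epsilon> + - shG [True] a
        + shG [False] S\<^sub>\<epsilon>"
    using commute_shG_0_1[of S\<^sub>\<epsilon> "- a"] by (simp add: commute_def add.assoc)
  also have "\<dots> = starG a (circG b c) + shG [False] S\<^sub>\<epsilon>"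
    by (simp add: starG_def circG_def minus_add add.assoc)
  finally show ?thesis .
qed

lemma starG_circG_left:
  "starG (circG a b) c = starG a (starG b c) + shG [False] A\<^sub>\<epsilon>"
proof -
  have "starG (circG a b) c =
      a + shG [True] b + A\<^sub>\<epsilon> + shG [True] c + S\<^sub>\<epsilon> + - shG [True] A\<^sub>\<epsilon> + - shG [True, True] b
        + - shG [True] a"
    by (simp add: starG_def circG_def minus_add add.assoc)
  also have "\<dots> = a + shG [True] b + shG [True, True] c + A\<^sub>\<epsilon> + S\<^sub>\<epsilon> + - shG [True] A\<^sub>\<epsilon>
        + - shG [True, True] b + - shG [True] a"
    using arg_cong[OF A_conj_shG_11[of c, symmetric], of "\<lambda>t. t + _"] by (simp add: add.assoc)
  also have "\<dots> = a + shG [True] b + shG [True, True] c + shG [True] S\<^sub>\<epsilon> + S\<^sub>\<epsilon> + shG [True] A\<^sub>\<epsilon>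
        + shG [False] A\<^sub>\<epsilon> + - shG [True] A\<^sub>\<epsilon> + - shG [True, True] b + - shG [True] a"
    using arg_cong[OF A_S_rel, of "\<lambda>t. t + _"] by (simp add: add.assoc)
  also have "\<dots> = a + shG [True] b + shG [True, True] c + shG [True] S\<^sub>\<epsilon> + S\<^sub>\<epsilon> + shG [False] A\<^sub>\<epsilon>
        + - shG [True, True] b + - shG [True] a"
    using commute_left_commute[OF commute_minus_right[OF commute_shG_0_1[of A\<^sub>\<epsilon> A\<^sub>\<epsilon>]]]
    by (simp add: add.assoc)
  also have "\<dots> = a + shG [True] b + shG [True, True] c + shG [True] S\<^sub>\<epsilon> + - shG [True, True] b
        + S\<^sub>\<epsilon> + - shG [True] a + shG [False] A\<^sub>\<epsilon>"
    using commute_left_commute[OF commute_shG_incomparable[of "[]" "[]" A\<^sub>\<epsilon> "[True]" "- b"]]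
      arg_cong[OF conj_swap_minus[OF S_conj_shG_11[of b], symmetric], of "\<lambda>t. t + _"]
      commute_shG_0_1[of A\<^sub>\<epsilon> "- a"]
    by (simp add: commute_def add.assoc)
  also have "\<dots> = starG a (starG b c) + shG [False] A\<^sub>\<epsilon>"
    by (simp add: starG_def minus_add add.assoc)
  finally show ?thesis .
qed

lemma coset_eq_iff: "coset_eq g g' \<longleftrightarrow> (\<exists>z. abs_G g' = abs_G g + shG [False] z)"
proof
  assume "coset_eq g g'"
  then obtain w where "geq (winv g @ g') (sh [False] w)"
    by (auto simp: coset_eq_def)
  then have "- abs_G g + abs_G g' = shG [False] (abs_G w)"
    by (simp add: G.abs_eq_iff[symmetric] abs_G_append abs_G_winv abs_G_sh)
  then show "\<exists>z. abs_G g' = abs_G g + shG [False] z"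
    by (metis add_minus_cancel)
next
  assume "\<exists>z. abs_G g' = abs_G g + shG [False] z"
  then obtain z where z: "abs_G g' = abs_G g + shG [False] z" ..
  obtain w where w: "z = abs_G w"
    by (induct z rule: G.abs_induct) auto
  have "abs_G (winv g @ g') = abs_G (sh [False] w)"
    using z w by (simp add: abs_G_append abs_G_winv abs_G_sh flip: add.assoc)
  then show "coset_eq g g'"
    by (auto simp: coset_eq_def G.abs_eq_iff)
qed

theorem proposition4p4:
  shows "(\<forall>g g' h h'. coset_eq g g' \<and> coset_eq h h' \<longrightarrow>
            coset_eq (ald_star g h) (ald_star g' h') \<and>
            coset_eq (ald_circ g h) (ald_circ g' h')) \<and>
         (\<forall>a b c.
            coset_eq (ald_star a (ald_star b c)) (ald_star (ald_star a b) (ald_star a c)) \<and>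
            coset_eq (ald_star a (ald_circ b c)) (ald_circ (ald_star a b) (ald_star a c)) \<and>
            coset_eq (ald_star a (ald_star b c)) (ald_star (ald_circ a b) c))"
proof (intro conjI allI impI)
  fix g g' h h'
  assume "coset_eq g g' \<and> coset_eq h h'"
  then obtain u v where "abs_G g' = abs_G g + shG [False] u" "abs_G h' = abs_G h + shG [False] v"
    by (auto simp: coset_eq_iff)
  then show "coset_eq (ald_star g h) (ald_star g' h')" "coset_eq (ald_circ g h) (ald_circ g' h')"
    by (auto simp only: coset_eq_iff abs_G_ald_star abs_G_ald_circ starG_add_shG_0 circG_add_shG_0)
next
  fix a b c
  show "coset_eq (ald_star a (ald_star b c)) (ald_star (ald_star a b) (ald_star a c))"
    "coset_eq (ald_star a (ald_circ b c)) (ald_circ (ald_star a b) (ald_star a c))"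
    "coset_eq (ald_star a (ald_star b c)) (ald_star (ald_circ a b) c)"
    by (auto simp: coset_eq_iff abs_G_ald_star abs_G_ald_circ
        starG_self_distrib starG_circG_distrib starG_circG_left)
qed

end
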